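(* (a) Let $L\in\mathbb{R}\cup\{\infty\}$, let $c<L/2$ be real, and let $\lambda\in\mathbb{R}$ if $L<\infty$ and $\lambda>0$ if $L=\infty$. For $\varepsilon>0$ set $c(\varepsilon):=e^{c/\varepsilon}$ and $\alpha(\varepsilon):=e^{-L/\varepsilon}$ (so $\alpha(\varepsilon)=0$ if $L=\infty$), and let $X(\varepsilon)\sim\mathrm{GIG}(\varepsilon\lambda,c(\varepsilon)\alpha(\varepsilon),c(\varepsilon))$. Then $\varepsilon\log X(\varepsilon)\to X$ in distribution as $\varepsilon\downarrow0$, where $X\sim\mathrm{stExp}(\lambda,c,L-c)$. (b) Let $\lambda>0$, $c\in\mathbb{R}$, $c(\varepsilon):=e^{c/\varepsilon}$, and $X(\varepsilon)\sim\mathrm{Gam}(\varepsilon\lambda,c(\varepsilon))$. Then $-\varepsilon\log X(\varepsilon)\to X$ in distribution as $\varepsilon\downarrow0$, where $X\sim\mathrm{sExp}(\lambda,c)$.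
   Context: $\mathrm{GIG}(\lambda,c_1,c_2)$ has density proportional to $x^{-\lambda-1}e^{-c_1x-c_2x^{-1}}\mathbf{1}_{(0,\infty)}(x)$, with $\mathrm{GIG}(\lambda,0,c_2)$ the inverse gamma law with density proportional to $x^{-\lambda-1}e^{-c_2x^{-1}}$ on $(0,\infty)$. $\mathrm{Gam}(\lambda,c)$ has density proportional to $x^{\lambda-1}e^{-cx}\mathbf{1}_{(0,\infty)}(x)$. $\mathrm{stExp}(\lambda,c_1,c_2)$ has density proportional to $e^{-\lambda x}\mathbf{1}_{[c_1,c_2]}(x)$, and $\mathrm{stExp}(\lambda,c,\infty)=\mathrm{sExp}(\lambda,c)$ (for $\lambda>0$) has density proportional to $e^{-\lambda x}\mathbf{1}_{[c,\infty)}(x)$. *)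

theory Defs
  imports "HOL-Analysis.Analysis"
begin

definition law_prop :: "(real \<Rightarrow> real) \<Rightarrow> real measure" where
  "law_prop f = density lborel (\<lambda>x. ennreal (f x / integral\<^sup>L lborel f))"

definition GIG :: "real \<Rightarrow> real \<Rightarrow> real \<Rightarrow> real measure" where
  "GIG l c1 c2 = law_prop (\<lambda>x. if 0 < x then x powr (-l - 1) * exp (- c1 * x - c2 / x) else 0)"

definition Gam :: "real \<Rightarrow> real \<Rightarrow> real measure" where
  "Gam l c = law_prop (\<lambda>x. if 0 < x then x powr (l - 1) * exp (- c * x) else 0)"

definition stExp :: "real \<Rightarrow> real \<Rightarrow> ereal \<Rightarrow> real measure" where
  "stExp l c1 c2 = law_prop (\<lambda>x. if c1 \<le> x \<and> ereal x \<le> c2 then exp (- l * x) else 0)"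

definition sExp :: "real \<Rightarrow> real \<Rightarrow> real measure" where
  "sExp l c = stExp l c \<infinity>"

definition conv_distr :: "('a \<Rightarrow> real measure) \<Rightarrow> 'a filter \<Rightarrow> real measure \<Rightarrow> bool" where
  "conv_distr M F N \<longleftrightarrow>
     (\<forall>f :: real \<Rightarrow> real. continuous_on UNIV f \<and> bounded (range f) \<longrightarrow>
        ((\<lambda>e. integral\<^sup>L (M e) f) \<longlongrightarrow> integral\<^sup>L N f) F)"

definition alpha_eps :: "ereal \<Rightarrow> real \<Rightarrow> real" where
  "alpha_eps L e = (case L of ereal r \<Rightarrow> exp (- r / e) | _ \<Rightarrow> 0)"

end

theory Submission
  imports Defs "HOL-Probability.Sinc_Integral" "HOL-Real_Asymp.Real_Asymp"
begin

(* Put t = 1/eps. The substitution y = eps ln x (resp. y = -eps ln x) turns the GIG (resp. Gamma)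
   density into one proportional to exp (-lam y - exp (t (c - y)) - exp (t (y - (L - c)))) on the
   real line, the last term being absent for L = oo. As t -> oo the two double-exponential walls
   freeze into the indicator of [c, L - c], and for t >= 1 all these densities are bounded by e^2
   times the one at t = 1, which is integrable. Dominated convergence therefore applies both to the
   normalising constants and to the integrals against bounded continuous test functions, and the
   limiting normalising constant is positive because c < L - c. *)

lemma has_bochner_integral_log_substitution:
  fixes h :: "real \<Rightarrow> real"
  assumes s: "s \<noteq> 0" and h: "integrable lborel h"
  shows "has_bochner_integral lborel (\<lambda>x. if 0 < x then h (s * ln x) / x else 0)
           (integral\<^sup>L lborel h / \<bar>s\<bar>)"
proof -
  define f where "f x = h (s * ln x) / x" for x
  have [measurable]: "h \<in> borel_measurable borel" using h by auto
  have der: "((\<lambda>y. exp (y / s)) has_field_derivative exp (y / s) / s) (at y within UNIV)" for y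
    using s by (auto intro!: derivative_eq_intros)
  have inj: "inj (\<lambda>y. exp (y / s))" using s by (auto simp: inj_on_def)
  have img: "range (\<lambda>y. exp (y / s)) = {0<..}"
  proof safe
    fix x :: real assume "0 < x"
    then have "x = exp (s * ln x / s)" using s by simp
    then show "x \<in> range (\<lambda>y. exp (y / s))" by blast
  qed simp
  have jacobian: "(\<lambda>y. \<bar>exp (y / s) / s\<bar> * f (exp (y / s))) = (\<lambda>y. h y / \<bar>s\<bar>)"
    using s by (simp add: f_def fun_eq_iff)
  have "(\<lambda>y. h y / \<bar>s\<bar>) absolutely_integrable_on UNIV"
    using h by (simp add: set_integrable_def integrable_completion)
  moreover have "integral UNIV (\<lambda>y. h y / \<bar>s\<bar>) = integral\<^sup>L lborel h / \<bar>s\<bar>"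
    using integral_lborel[of "\<lambda>y. h y / \<bar>s\<bar>"] h by simp
  moreover have "(\<lambda>y. h y / \<bar>s\<bar>) absolutely_integrable_on UNIV
        \<and> integral UNIV (\<lambda>y. h y / \<bar>s\<bar>) = integral\<^sup>L lborel h / \<bar>s\<bar>
      \<longleftrightarrow> f absolutely_integrable_on {0<..} \<and> integral {0<..} f = integral\<^sup>L lborel h / \<bar>s\<bar>"
    unfolding jacobian[symmetric] img[symmetric]
    by (rule has_absolute_integral_change_of_variables_1'[OF _ der inj]) simp
  ultimately have fa: "f absolutely_integrable_on {0<..}"
    and fi: "integral {0<..} f = integral\<^sup>L lborel h / \<bar>s\<bar>" by blast+
  have ind: "(\<lambda>x. if 0 < x then h (s * ln x) / x else 0) = (\<lambda>x. indicator {0<..} x *\<^sub>R f x)"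
    by (auto simp: f_def fun_eq_iff)
  have meas: "(\<lambda>x. if 0 < x then h (s * ln x) / x else 0) \<in> borel_measurable lborel"
    by measurable
  have "integrable lebesgue (\<lambda>x. if 0 < x then h (s * ln x) / x else 0)"
    using fa unfolding ind set_integrable_def by simp
  moreover have "integral\<^sup>L lebesgue (\<lambda>x. if 0 < x then h (s * ln x) / x else 0) = integral {0<..} f"
    using set_lebesgue_integral_eq_integral(2)[OF fa] unfolding ind set_lebesgue_integral_def by simp
  ultimately show ?thesis
    using fi integrable_completion[OF meas] integral_completion[OF meas]
    by (simp add: has_bochner_integral_iff)
qed

lemma law_prop_integral:
  fixes g f :: "real \<Rightarrow> real"
  assumes [measurable]: "g \<in> borel_measurable borel" "f \<in> borel_measurable borel"
    and g_nonneg: "\<And>x. 0 \<le> g x"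
  shows "integral\<^sup>L (law_prop g) f = (\<integral>x. f x * g x \<partial>lborel) / (\<integral>x. g x \<partial>lborel)"
proof -
  have "integral\<^sup>L (law_prop g) f = (\<integral>x. g x / (\<integral>x. g x \<partial>lborel) * f x \<partial>lborel)"
    unfolding law_prop_def using g_nonneg by (subst integral_density) auto
  then show ?thesis by (simp add: field_simps)
qed

lemma emeasure_law_prop:
  fixes g :: "real \<Rightarrow> real"
  assumes [measurable]: "g \<in> borel_measurable borel" and g_nonneg: "\<And>x. 0 \<le> g x"
    and g: "integrable lborel g" and A: "A \<in> sets borel"
  shows "emeasure (law_prop g) A
    = ennreal ((\<integral>x. indicator A x * g x \<partial>lborel) / (\<integral>x. g x \<partial>lborel))"
proof -
  have "integrable lborel (\<lambda>x. indicator A x * g x / (\<integral>x. g x \<partial>lborel))"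
    using integrable_mult_indicator[of A lborel g] A g by simp
  moreover have "(\<lambda>x. ennreal (g x / (\<integral>x. g x \<partial>lborel)) * indicator A x)
      = (\<lambda>x. ennreal (indicator A x * g x / (\<integral>x. g x \<partial>lborel)))"
    by (auto simp: fun_eq_iff indicator_def)
  ultimately show ?thesis
    unfolding law_prop_def using A g_nonneg
    by (simp add: emeasure_density nn_integral_eq_integral)
qed

lemma distr_law_prop_log:
  fixes Q :: "real \<Rightarrow> real"
  assumes s: "s \<noteq> 0" and [measurable]: "Q \<in> borel_measurable borel"
    and Q_nonneg: "\<And>y. 0 \<le> Q y" and Q: "integrable lborel Q"
  shows "distr (law_prop (\<lambda>x. if 0 < x then Q (s * ln x) / x else 0)) borel (\<lambda>x. s * ln x)
    = law_prop Q" (is "distr (law_prop ?p) _ _ = _")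
proof (rule measure_eqI)
  fix A assume "A \<in> sets (distr (law_prop ?p) borel (\<lambda>x. s * ln x))"
  then have A [measurable]: "A \<in> sets borel" by simp
  have AQ: "integrable lborel (\<lambda>y. indicator A y * Q y)"
    using integrable_mult_indicator[of A lborel Q] Q by simp
  note substitution = has_bochner_integral_log_substitution[OF s]
  have "emeasure (distr (law_prop ?p) borel (\<lambda>x. s * ln x)) A
      = emeasure (law_prop ?p) ((\<lambda>x. s * ln x) -` A)"
    by (subst emeasure_distr) (auto simp: law_prop_def)
  also have "\<dots> = ennreal ((\<integral>x. indicator ((\<lambda>x. s * ln x) -` A) x * ?p x \<partial>lborel)
      / (\<integral>x. ?p x \<partial>lborel))"
    using integrable.intros[OF substitution[OF Q]] Q_nonneg
    by (intro emeasure_law_prop measurable_sets_borel[OF _ A]) auto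
  also have "(\<lambda>x. indicator ((\<lambda>x. s * ln x) -` A) x * ?p x)
      = (\<lambda>x. if 0 < x then indicator A (s * ln x) * Q (s * ln x) / x else 0)"
    by (auto simp: fun_eq_iff indicator_def)
  also have "(\<integral>x. (if 0 < x then indicator A (s * ln x) * Q (s * ln x) / x else 0) \<partial>lborel)
      = (\<integral>y. indicator A y * Q y \<partial>lborel) / \<bar>s\<bar>"
    using has_bochner_integral_integral_eq[OF substitution[OF AQ]] by simp
  also have "(\<integral>x. ?p x \<partial>lborel) = (\<integral>y. Q y \<partial>lborel) / \<bar>s\<bar>"
    using has_bochner_integral_integral_eq[OF substitution[OF Q]] by simp
  finally show "emeasure (distr (law_prop ?p) borel (\<lambda>x. s * ln x)) A = emeasure (law_prop Q) A"
    using emeasure_law_prop[OF _ Q_nonneg Q A] s by simp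
qed (simp add: law_prop_def)

lemma conv_distr_law_prop_at_top:
  fixes q :: "real \<Rightarrow> real \<Rightarrow> real" and g w :: "real \<Rightarrow> real"
  assumes [measurable]: "\<And>t. q t \<in> borel_measurable borel" "g \<in> borel_measurable borel"
    and q_nonneg: "\<And>t y. 0 \<le> q t y" and g_nonneg: "\<And>y. 0 \<le> g y"
    and w: "integrable lborel w" and q_le: "\<forall>\<^sub>F t in at_top. \<forall>y. q t y \<le> w y"
    and lim: "AE y in lborel. ((\<lambda>t. q t y) \<longlongrightarrow> g y) at_top"
    and g_integral: "(\<integral>y. g y \<partial>lborel) \<noteq> 0"
  shows "conv_distr (\<lambda>t. law_prop (q t)) at_top (law_prop g)"
  unfolding conv_distr_def
proof safe
  fix f :: "real \<Rightarrow> real" assume "continuous_on UNIV f" "bounded (range f)"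
  then have [measurable]: "f \<in> borel_measurable borel" and "\<exists>M. \<forall>y. \<bar>f y\<bar> \<le> M"
    by (auto simp: borel_measurable_continuous_onI bounded_iff)
  then obtain M where M: "\<And>y. \<bar>f y\<bar> \<le> M" by blast
  then have M_nonneg: "0 \<le> M" by (meson abs_ge_zero order_trans)
  have "((\<lambda>t. \<integral>y. f y * q t y \<partial>lborel) \<longlongrightarrow> \<integral>y. f y * g y \<partial>lborel) at_top"
  proof (rule integral_dominated_convergence_at_top[where w="\<lambda>y. M * w y"])
    show "integrable lborel (\<lambda>y. M * w y)" using w by simp
    show "AE y in lborel. ((\<lambda>t. f y * q t y) \<longlongrightarrow> f y * g y) at_top"
      using lim by eventually_elim (rule tendsto_mult_left)
    show "\<forall>\<^sub>F t in at_top. AE y in lborel. norm (f y * q t y) \<le> M * w y"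
      using q_le
    proof eventually_elim
      case (elim t)
      have "\<bar>f y\<bar> * q t y \<le> M * w y" for y
        using M elim q_nonneg M_nonneg by (intro mult_mono) auto
      then show ?case by (simp add: abs_mult abs_of_nonneg[OF q_nonneg])
    qed
  qed measurable
  moreover have "((\<lambda>t. \<integral>y. q t y \<partial>lborel) \<longlongrightarrow> \<integral>y. g y \<partial>lborel) at_top"
    by (rule integral_dominated_convergence_at_top[OF _ _ w lim])
       (use q_le in \<open>auto elim!: eventually_mono simp: q_nonneg\<close>)
  ultimately show "((\<lambda>t. integral\<^sup>L (law_prop (q t)) f) \<longlongrightarrow> integral\<^sup>L (law_prop g) f) at_top"
    using g_integral by (simp add: law_prop_integral q_nonneg g_nonneg tendsto_divide)
qed

lemma conv_distr_eventually_cong: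
  assumes "\<forall>\<^sub>F e in F. M e = M' e"
  shows "conv_distr M F N \<longleftrightarrow> conv_distr M' F N"
proof -
  have "((\<lambda>e. integral\<^sup>L (M e) f) \<longlongrightarrow> l) F \<longleftrightarrow> ((\<lambda>e. integral\<^sup>L (M' e) f) \<longlongrightarrow> l) F"
    for f :: "real \<Rightarrow> real" and l
    using assms by (intro tendsto_cong) (auto elim: eventually_mono)
  then show ?thesis unfolding conv_distr_def by simp
qed

lemma exp_sub_one_le_exp_mult:
  fixes t u :: real assumes "1 \<le> t"
  shows "exp u - 1 \<le> exp (t * u)"
proof (cases "0 \<le> u")
  case True
  then have "u \<le> t * u" using assms mult_right_mono[of 1 t u] by simp
  then have "exp u \<le> exp (t * u)" by simp
  then show ?thesis by linarith
next
  case False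
  then have "exp u \<le> 1" by simp
  then show ?thesis using exp_gt_zero[of "t * u"] by linarith
qed

lemma exp_mult_dominates_linear:
  fixes t A :: real assumes t: "0 < t" and A: "0 < A"
  obtains D where "\<And>v. A * v - D \<le> exp (t * v)"
proof
  define K where "K = A / t"
  have K: "0 < K" using t A by (simp add: K_def)
  fix v
  have "1 + (t * v - ln K) \<le> exp (t * v) / K"
    using exp_ge_add_one_self[of "t * v - ln K"] K by (simp add: exp_diff)
  then have "K * (1 + t * v - ln K) \<le> exp (t * v)" using K by (simp add: field_simps)
  moreover have "K * (1 + t * v - ln K) = A * v - (K * ln K - K)"
    using t by (simp add: K_def field_simps)
  ultimately show "A * v - (K * ln K - K) \<le> exp (t * v)" by linarith
qed

lemma integrable_exp_abs:
  fixes C \<mu> :: real assumes "0 < \<mu>"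
  shows "integrable lborel (\<lambda>y. exp (C - \<mu> * \<bar>y\<bar>))"
proof -
  define F where "F x = x ^ 0 * exp (- x) * indicator {0..} x" for x :: real
  have "integrable lborel F"
    unfolding F_def using has_bochner_integral_I0i_power_exp_m'[of 0] by (rule integrable.intros)
  then have "integrable lborel (\<lambda>y. F (0 + \<mu> * y))" "integrable lborel (\<lambda>y. F (0 + - \<mu> * y))"
    using lborel_integrable_real_affine_iff[of \<mu> F 0] lborel_integrable_real_affine_iff[of "- \<mu>" F 0]
      assms by simp_all
  then have "integrable lborel (\<lambda>y. exp C * (F (\<mu> * y) + F (- \<mu> * y)))" by simp
  then show ?thesis
  proof (rule Bochner_Integration.integrable_bound)
    show "AE y in lborel. norm (exp (C - \<mu> * \<bar>y\<bar>)) \<le> norm (exp C * (F (\<mu> * y) + F (- \<mu> * y)))"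
      using assms by (intro AE_I2) (auto simp: F_def exp_diff divide_inverse exp_minus
          indicator_def zero_le_mult_iff mult_le_0_iff)
  qed measurable
qed

lemma tendsto_exp_minus_exp_at_top:
  fixes a d :: real assumes "0 < d"
  shows "((\<lambda>t. exp (a - exp (t * d))) \<longlongrightarrow> 0) at_top"
  using assms by real_asymp

lemma tendsto_exp_mult_at_top:
  fixes d :: real assumes "d < 0"
  shows "((\<lambda>t. exp (t * d)) \<longlongrightarrow> 0) at_top"
  using assms by real_asymp

definition upper_barrier :: "ereal \<Rightarrow> real \<Rightarrow> real \<Rightarrow> real" where
  "upper_barrier R t y = (case R of ereal r \<Rightarrow> exp (t * (y - r)) | _ \<Rightarrow> 0)"

definition smoothed_trunc_exp :: "real \<Rightarrow> real \<Rightarrow> ereal \<Rightarrow> real \<Rightarrow> real \<Rightarrow> real" where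
  "smoothed_trunc_exp lam c R t y = exp (- lam * y - exp (t * (c - y)) - upper_barrier R t y)"

definition trunc_exp :: "real \<Rightarrow> real \<Rightarrow> ereal \<Rightarrow> real \<Rightarrow> real" where
  "trunc_exp lam c R y = (if c \<le> y \<and> ereal y \<le> R then exp (- lam * y) else 0)"

lemma stExp_eq_law_prop_trunc_exp: "stExp lam c R = law_prop (trunc_exp lam c R)"
  unfolding stExp_def trunc_exp_def ..

lemma upper_barrier_measurable [measurable]: "upper_barrier R t \<in> borel_measurable borel"
  by (cases R) (simp_all add: upper_barrier_def[abs_def])

lemma upper_barrier_nonneg: "0 \<le> upper_barrier R t y"
  by (cases R) (simp_all add: upper_barrier_def)

lemma smoothed_trunc_exp_measurable [measurable]:
  "smoothed_trunc_exp lam c R t \<in> borel_measurable borel"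
  unfolding smoothed_trunc_exp_def by measurable

lemma trunc_exp_measurable [measurable]: "trunc_exp lam c R \<in> borel_measurable borel"
  unfolding trunc_exp_def by measurable

lemma smoothed_trunc_exp_nonneg: "0 \<le> smoothed_trunc_exp lam c R t y"
  by (simp add: smoothed_trunc_exp_def)

lemma trunc_exp_nonneg: "0 \<le> trunc_exp lam c R y"
  by (simp add: trunc_exp_def)

lemma smoothed_trunc_exp_le_smoothed_trunc_exp_1:
  assumes t: "1 \<le> t"
  shows "smoothed_trunc_exp lam c R t y \<le> exp 2 * smoothed_trunc_exp lam c R 1 y"
proof -
  have "- exp (t * (c - y)) \<le> 1 - exp (c - y)"
    using exp_sub_one_le_exp_mult[OF t, of "c - y"] by simp
  moreover have "- upper_barrier R t y \<le> 1 - upper_barrier R 1 y"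
  proof (cases R)
    case (real r)
    then show ?thesis using exp_sub_one_le_exp_mult[OF t, of "y - r"] by (simp add: upper_barrier_def)
  qed (simp_all add: upper_barrier_def)
  ultimately show ?thesis
    unfolding smoothed_trunc_exp_def exp_add[symmetric] by simp
qed

lemma trunc_exp_le_smoothed_trunc_exp_1:
  "trunc_exp lam c R y \<le> exp 2 * smoothed_trunc_exp lam c R 1 y"
proof (cases "c \<le> y \<and> ereal y \<le> R")
  case True
  have "exp (1 * (c - y)) \<le> 1" using True by simp
  moreover have "upper_barrier R 1 y \<le> 1"
    using True by (cases R) (simp_all add: upper_barrier_def)
  ultimately have "exp (- lam * y) \<le> exp (2 + (- lam * y - exp (1 * (c - y)) - upper_barrier R 1 y))"
    by (simp only: exp_le_cancel_iff)
  then show ?thesis using True by (simp add: trunc_exp_def smoothed_trunc_exp_def exp_add)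
qed (auto simp: trunc_exp_def smoothed_trunc_exp_nonneg)

lemma smoothed_trunc_exp_le_exp_abs:
  assumes t: "0 < t" and R: "ereal c < R" and lam: "R = \<infinity> \<Longrightarrow> 0 < lam"
  obtains C \<mu> where "0 < \<mu>" "\<And>y. smoothed_trunc_exp lam c R t y \<le> exp (C - \<mu> * \<bar>y\<bar>)"
proof -
  (* Each double-exponential wall dominates a linear function of slope A > |lam|, which beats
     exp (-lam y) on its side; without an upper wall (R = oo) the upper tail is controlled by lam > 0. *)
  define A where "A = \<bar>lam\<bar> + 1"
  have A: "1 \<le> A - lam" "1 \<le> A + lam" "0 < A" by (auto simp: A_def)
  obtain D where D: "\<And>v. A * v - D \<le> exp (t * v)" using exp_mult_dominates_linear[OF t A(3)] by blast
  have wall: "- exp (t * v) \<le> D - A * v" for v using D[of v] by linarith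
  define \<mu> where "\<mu> = (if R = \<infinity> then min lam 1 else 1)"
  define C where "C = \<bar>D\<bar> + A * \<bar>c\<bar> + A * \<bar>real_of_ereal R\<bar>"
  have \<mu>: "0 < \<mu>" "\<mu> \<le> 1" using lam by (auto simp: \<mu>_def)
  have A_abs: "- (A * c) \<le> A * \<bar>c\<bar>" "0 \<le> A * \<bar>c\<bar>"
    using mult_left_mono[OF abs_ge_minus_self[of c], of A] A(3) by simp_all
  have "0 \<le> A * \<bar>real_of_ereal R\<bar>"
    by (rule mult_nonneg_nonneg[OF less_imp_le[OF A(3)] abs_ge_zero])
  with A_abs have C: "D - A * c \<le> C" "0 \<le> C"
    unfolding C_def using abs_ge_self[of D] by linarith+
  have "- lam * y - exp (t * (c - y)) - upper_barrier R t y \<le> C - \<mu> * \<bar>y\<bar>" for y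
  proof (cases "y < 0")
    case True
    have "(A - lam - \<mu>) * y \<le> 0" using True A \<mu> by (intro mult_nonneg_nonpos) auto
    moreover have "- exp (t * (c - y)) \<le> D - A * c + A * y"
      using wall[of "c - y"] by (simp add: algebra_simps)
    moreover have "\<mu> * \<bar>y\<bar> = - (\<mu> * y)" using True by simp
    ultimately show ?thesis
      using upper_barrier_nonneg[of R t y] C by (simp add: algebra_simps)
  next
    case False
    then have abs_y: "\<mu> * \<bar>y\<bar> = \<mu> * y" by simp
    have lam_y: "- lam * y = - (lam * y)" by simp
    show ?thesis
    proof (cases R)
      case (real r)
      have "0 \<le> (A + lam - \<mu>) * y" using False A \<mu> by (intro mult_nonneg_nonneg) auto
      then have "\<mu> * y \<le> A * y + lam * y" by (simp add: algebra_simps)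
      moreover have "D + A * r \<le> C"
        using mult_left_mono[OF abs_ge_self[of r] less_imp_le[OF A(3)]] abs_ge_self[of D] A_abs(2)
        unfolding C_def real real_of_ereal.simps by linarith
      moreover have "- upper_barrier R t y \<le> D + A * r - A * y"
        using wall[of "y - r"] real by (simp add: upper_barrier_def algebra_simps)
      ultimately show ?thesis
        using exp_ge_zero[of "t * (c - y)"] abs_y lam_y by linarith
    next
      case PInf
      then have "0 \<le> (lam - \<mu>) * y" using False lam by (intro mult_nonneg_nonneg) (auto simp: \<mu>_def)
      then have "\<mu> * y \<le> lam * y" by (simp add: algebra_simps)
      moreover have "upper_barrier R t y = 0" using PInf by (simp add: upper_barrier_def)
      ultimately show ?thesis
        using exp_ge_zero[of "t * (c - y)"] abs_y lam_y C(2) by linarith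
    qed (use R in simp)
  qed
  then show ?thesis by (intro that[OF \<mu>(1)]) (simp add: smoothed_trunc_exp_def)
qed

lemma integrable_smoothed_trunc_exp:
  assumes "0 < t" "ereal c < R" "R = \<infinity> \<Longrightarrow> 0 < lam"
  shows "integrable lborel (smoothed_trunc_exp lam c R t)"
proof -
  obtain C \<mu> where "0 < \<mu>" and le: "\<And>y. smoothed_trunc_exp lam c R t y \<le> exp (C - \<mu> * \<bar>y\<bar>)"
    using smoothed_trunc_exp_le_exp_abs[OF assms] by blast
  from integrable_exp_abs[where C=C, OF this(1)] show ?thesis
    by (rule Bochner_Integration.integrable_bound) (auto simp: smoothed_trunc_exp_nonneg le)
qed

lemma smoothed_trunc_exp_tendsto:
  assumes "R \<noteq> -\<infinity>" "y \<noteq> c" "ereal y \<noteq> R"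
  shows "((\<lambda>t. smoothed_trunc_exp lam c R t y) \<longlongrightarrow> trunc_exp lam c R y) at_top"
proof -
  have lower_wall: "smoothed_trunc_exp lam c R t y \<le> exp (- lam * y - exp (t * (c - y)))" for t
    using upper_barrier_nonneg[of R t y] by (simp add: smoothed_trunc_exp_def)
  have "y < c \<or> c < y" using assms(2) by linarith
  moreover have "R = \<infinity> \<or> (\<exists>r. R = ereal r \<and> (r < y \<or> y < r))"
    using assms(1,3) by (cases R) auto
  ultimately consider (below) "y < c" | (above) r where "R = ereal r" "r < y"
    | (inside) "c < y" "ereal y < R"
    by auto
  then show ?thesis
  proof cases
    case below
    then have "trunc_exp lam c R y = 0" by (simp add: trunc_exp_def)
    moreover have "((\<lambda>t. smoothed_trunc_exp lam c R t y) \<longlongrightarrow> 0) at_top"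
    proof (rule tendsto_sandwich[OF _ _ tendsto_const])
      show "((\<lambda>t. exp (- lam * y - exp (t * (c - y)))) \<longlongrightarrow> 0) at_top"
        using below by (intro tendsto_exp_minus_exp_at_top) simp
    qed (intro always_eventually allI smoothed_trunc_exp_nonneg lower_wall)+
    ultimately show ?thesis by simp
  next
    case above
    then have "trunc_exp lam c R y = 0" by (simp add: trunc_exp_def)
    moreover have "((\<lambda>t. smoothed_trunc_exp lam c R t y) \<longlongrightarrow> 0) at_top"
    proof (rule tendsto_sandwich[OF _ _ tendsto_const])
      show "((\<lambda>t. exp (- lam * y - exp (t * (y - r)))) \<longlongrightarrow> 0) at_top"
        using above by (intro tendsto_exp_minus_exp_at_top) simp
    qed (use above in \<open>auto intro!: always_eventually smoothed_trunc_exp_nonneg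
                         simp: smoothed_trunc_exp_def upper_barrier_def\<close>)
    ultimately show ?thesis by simp
  next
    case inside
    have "((\<lambda>t. upper_barrier R t y) \<longlongrightarrow> 0) at_top"
    proof (cases R)
      case (real r)
      then show ?thesis
        using inside tendsto_exp_mult_at_top[of "y - r"] by (simp add: upper_barrier_def)
    qed (use inside in \<open>simp_all add: upper_barrier_def\<close>)
    moreover have "((\<lambda>t. exp (t * (c - y))) \<longlongrightarrow> 0) at_top"
      using inside by (intro tendsto_exp_mult_at_top) simp
    ultimately have "((\<lambda>t. exp (- lam * y - exp (t * (c - y)) - upper_barrier R t y))
        \<longlongrightarrow> exp (- lam * y - 0 - 0)) at_top"
      by (intro tendsto_intros)
    moreover have "c \<le> y \<and> ereal y \<le> R" using inside by simp
    ultimately show ?thesis by (simp add: smoothed_trunc_exp_def trunc_exp_def)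
  qed
qed

lemma integral_trunc_exp_pos:
  assumes R: "ereal c < R" and lam: "R = \<infinity> \<Longrightarrow> 0 < lam"
  shows "0 < (\<integral>y. trunc_exp lam c R y \<partial>lborel)"
proof -
  obtain d where d: "c < d" "ereal d < R" using ereal_dense2[OF R] by auto
  have "integrable lborel (smoothed_trunc_exp lam c R 1)"
    using R lam by (intro integrable_smoothed_trunc_exp) auto
  then have integrable: "integrable lborel (trunc_exp lam c R)"
    by (rule Bochner_Integration.integrable_bound[where f="\<lambda>y. exp 2 * smoothed_trunc_exp lam c R 1 y", OF integrable_mult_right])
       (auto intro!: AE_I2 order_trans[OF trunc_exp_le_smoothed_trunc_exp_1 abs_ge_self]
          simp: trunc_exp_nonneg)
  have "\<not> (AE y in lborel. trunc_exp lam c R y = 0)"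
  proof
    assume "AE y in lborel. trunc_exp lam c R y = 0"
    then have "AE y in lborel. y \<notin> {c<..<d}"
    proof eventually_elim
      case (elim y)
      show "y \<notin> {c<..<d}"
      proof
        assume y: "y \<in> {c<..<d}"
        then have "ereal y < R" using d(2) less_trans[of "ereal y" "ereal d" R] by simp
        with y elim show False by (simp add: trunc_exp_def less_imp_le)
      qed
    qed
    then have "emeasure lborel {c<..<d} = 0"
      by (subst (asm) AE_iff_measurable[of "{c<..<d}"]) auto
    with d show False by simp
  qed
  then have "(\<integral>y. trunc_exp lam c R y \<partial>lborel) \<noteq> 0"
    by (simp add: integral_nonneg_eq_0_iff_AE[OF integrable] trunc_exp_nonneg)
  moreover have "0 \<le> (\<integral>y. trunc_exp lam c R y \<partial>lborel)"
    by (rule integral_nonneg_AE) (simp add: trunc_exp_nonneg)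
  ultimately show ?thesis by linarith
qed

lemma conv_distr_smoothed_trunc_exp:
  assumes R: "ereal c < R" and lam: "R = \<infinity> \<Longrightarrow> 0 < lam"
  shows "conv_distr (\<lambda>e. law_prop (smoothed_trunc_exp lam c R (1 / e))) (at_right 0) (stExp lam c R)"
proof -
  have "conv_distr (\<lambda>t. law_prop (smoothed_trunc_exp lam c R t)) at_top (law_prop (trunc_exp lam c R))"
  proof (rule conv_distr_law_prop_at_top)
    show "integrable lborel (\<lambda>y. exp 2 * smoothed_trunc_exp lam c R 1 y)"
      using R lam by (intro integrable_mult_right integrable_smoothed_trunc_exp) auto
    show "\<forall>\<^sub>F t in at_top. \<forall>y. smoothed_trunc_exp lam c R t y \<le> exp 2 * smoothed_trunc_exp lam c R 1 y"
      using eventually_ge_at_top[of 1] by eventually_elim (simp add: smoothed_trunc_exp_le_smoothed_trunc_exp_1)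
    show "AE y in lborel. ((\<lambda>t. smoothed_trunc_exp lam c R t y) \<longlongrightarrow> trunc_exp lam c R y) at_top"
      using AE_lborel_singleton[of c] AE_lborel_singleton[of "real_of_ereal R"]
    proof eventually_elim
      case (elim y)
      then have "ereal y \<noteq> R" using R by (cases R) auto
      with elim R show ?case by (intro smoothed_trunc_exp_tendsto) auto
    qed
    show "(\<integral>y. trunc_exp lam c R y \<partial>lborel) \<noteq> 0"
      using integral_trunc_exp_pos[OF R lam] by simp
  qed (simp_all add: smoothed_trunc_exp_nonneg trunc_exp_nonneg)
  then show ?thesis
    unfolding conv_distr_def filterlim_at_right_to_top stExp_eq_law_prop_trunc_exp
    by (simp add: divide_inverse)
qed

lemma GIG_density_log:
  assumes e: "0 < e" and x: "0 < x" and L: "L \<noteq> -\<infinity>"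
  shows "x powr (- (e * lam) - 1) * exp (- (exp (c / e) * alpha_eps L e) * x - exp (c / e) / x)
    = smoothed_trunc_exp lam c (L - ereal c) (1 / e) (e * ln x) / x"
proof -
  have "exp (c / e) * alpha_eps L e * x = upper_barrier (L - ereal c) (1 / e) (e * ln x)"
  proof (cases L)
    case (real l)
    have "1 / e * (e * ln x - (l - c)) = c / e - l / e + ln x"
      using e by (simp add: field_simps)
    then have "exp (1 / e * (e * ln x - (l - c))) = exp (c / e) * exp (- l / e) * x"
      using x by (simp add: exp_add exp_diff exp_minus divide_inverse)
    then show ?thesis by (simp add: real alpha_eps_def upper_barrier_def)
  qed (use L in \<open>simp_all add: alpha_eps_def upper_barrier_def\<close>)
  moreover have "exp (c / e) / x = exp (1 / e * (c - e * ln x))"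
    using e x by (simp add: exp_diff diff_divide_distrib)
  moreover have "x powr (- (e * lam) - 1) = exp (- lam * (e * ln x)) / x"
    using x by (simp add: powr_def exp_diff algebra_simps)
  ultimately show ?thesis
    by (simp add: smoothed_trunc_exp_def exp_diff exp_minus exp_add field_simps)
qed

lemma Gam_density_log:
  assumes e: "0 < e" and x: "0 < x"
  shows "x powr (e * lam - 1) * exp (- exp (c / e) * x)
    = smoothed_trunc_exp lam c \<infinity> (1 / e) (- e * ln x) / x"
proof -
  have "1 / e * (c - - e * ln x) = c / e + ln x"
    using e by (simp add: field_simps)
  then have "exp (c / e) * x = exp (1 / e * (c - - e * ln x))"
    using x by (simp add: exp_add)
  moreover have "x powr (e * lam - 1) = exp (- lam * (- e * ln x)) / x"
    using x by (simp add: powr_def exp_diff algebra_simps)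
  ultimately show ?thesis
    by (simp add: smoothed_trunc_exp_def upper_barrier_def exp_diff exp_minus field_simps)
qed

lemma distr_GIG_log:
  assumes e: "0 < e" and R: "ereal c < L - ereal c" and lam: "L - ereal c = \<infinity> \<Longrightarrow> 0 < lam"
  shows "distr (GIG (e * lam) (exp (c / e) * alpha_eps L e) (exp (c / e))) borel (\<lambda>x. e * ln x)
    = law_prop (smoothed_trunc_exp lam c (L - ereal c) (1 / e))"
proof -
  have L: "L \<noteq> -\<infinity>" using R by auto
  have "GIG (e * lam) (exp (c / e) * alpha_eps L e) (exp (c / e))
      = law_prop (\<lambda>x. if 0 < x then smoothed_trunc_exp lam c (L - ereal c) (1 / e) (e * ln x) / x else 0)"
    unfolding GIG_def using GIG_density_log[OF e _ L] by (intro arg_cong[where f=law_prop] ext) auto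
  moreover have "integrable lborel (smoothed_trunc_exp lam c (L - ereal c) (1 / e))"
    using e R lam by (intro integrable_smoothed_trunc_exp) auto
  ultimately show ?thesis
    using distr_law_prop_log[of e] e by (simp add: smoothed_trunc_exp_nonneg)
qed

lemma distr_Gam_log:
  assumes e: "0 < e" and lam: "0 < lam"
  shows "distr (Gam (e * lam) (exp (c / e))) borel (\<lambda>x. - e * ln x)
    = law_prop (smoothed_trunc_exp lam c \<infinity> (1 / e))"
proof -
  have "Gam (e * lam) (exp (c / e))
      = law_prop (\<lambda>x. if 0 < x then smoothed_trunc_exp lam c \<infinity> (1 / e) (- e * ln x) / x else 0)"
    unfolding Gam_def using Gam_density_log[OF e] by (intro arg_cong[where f=law_prop] ext) auto
  moreover have "integrable lborel (smoothed_trunc_exp lam c \<infinity> (1 / e))"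
    using e lam by (intro integrable_smoothed_trunc_exp) auto
  ultimately show ?thesis
    using distr_law_prop_log[of "- e"] e by (simp add: smoothed_trunc_exp_nonneg)
qed

theorem proposition5p1:
  fixes L :: ereal and c lam :: real
  shows
   "(L \<noteq> -\<infinity> \<and> ereal c < L / 2 \<and> (L = \<infinity> \<longrightarrow> lam > 0) \<longrightarrow>
      conv_distr
        (\<lambda>e. distr (GIG (e * lam) (exp (c / e) * alpha_eps L e) (exp (c / e))) borel
                  (\<lambda>x. e * ln x))
        (at_right 0) (stExp lam c (L - ereal c)))
    \<and>
    (lam > 0 \<longrightarrow>
      conv_distr
        (\<lambda>e. distr (Gam (e * lam) (exp (c / e))) borel (\<lambda>x. - e * ln x))
        (at_right 0) (sExp lam c))"
proof (intro conjI impI)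
  assume "L \<noteq> -\<infinity> \<and> ereal c < L / 2 \<and> (L = \<infinity> \<longrightarrow> lam > 0)"
  then have R: "ereal c < L - ereal c" and lam: "L - ereal c = \<infinity> \<Longrightarrow> 0 < lam"
    by (cases L; simp)+
  have "\<forall>\<^sub>F e in at_right 0. distr (GIG (e * lam) (exp (c / e) * alpha_eps L e) (exp (c / e))) borel
      (\<lambda>x. e * ln x) = law_prop (smoothed_trunc_exp lam c (L - ereal c) (1 / e))"
    using eventually_at_right_less[of 0] by eventually_elim (rule distr_GIG_log[OF _ R lam])
  then show "conv_distr
        (\<lambda>e. distr (GIG (e * lam) (exp (c / e) * alpha_eps L e) (exp (c / e))) borel
                  (\<lambda>x. e * ln x))
        (at_right 0) (stExp lam c (L - ereal c))"
    by (subst conv_distr_eventually_cong) (use conv_distr_smoothed_trunc_exp[OF R lam] in auto)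
next
  assume lam: "0 < lam"
  have "\<forall>\<^sub>F e in at_right 0. distr (Gam (e * lam) (exp (c / e))) borel (\<lambda>x. - e * ln x)
      = law_prop (smoothed_trunc_exp lam c \<infinity> (1 / e))"
    using eventually_at_right_less[of 0] by eventually_elim (rule distr_Gam_log[OF _ lam])
  then show "conv_distr
        (\<lambda>e. distr (Gam (e * lam) (exp (c / e))) borel (\<lambda>x. - e * ln x))
        (at_right 0) (sExp lam c)"
    unfolding sExp_def
    by (subst conv_distr_eventually_cong) (use conv_distr_smoothed_trunc_exp[of c \<infinity> lam] lam in auto)
qed

end
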